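(* Let $S$ be a conical category and $a,b\in S$. (1) If $S$ is left cancellative and $\mathrm{s}(a)=\mathrm{s}(b)$, then $\varepsilon_S(a)$ and $\varepsilon_S(b)$ have a left gcd in $\mathrm{U_{mon}}(S)$ iff $a$ and $b$ have a left gcd $a\wedge b$ in $S$, and in that case $\varepsilon_S(a\wedge b)$ is the left gcd of $\varepsilon_S(a),\varepsilon_S(b)$. (2) If $S$ is right cancellative and $\mathrm{t}(a)=\mathrm{t}(b)$, then $\varepsilon_S(a)$ and $\varepsilon_S(b)$ have a right gcd in $\mathrm{U_{mon}}(S)$ iff $a$ and $b$ have a right gcd $a\mathbin{\widetilde\wedge} b$ in $S$, and in that case $\varepsilon_S(a\mathbin{\widetilde\wedge} b)$ is the right gcd of $\varepsilon_S(a),\varepsilon_S(b)$.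
   Context: Categories are arrow-only: a set $S$ with partial associative multiplication, identities $\mathrm{Id}\,S$, source/target identities $\mathrm{s}(x),\mathrm{t}(x)$. $S$ is conical if $xy\in\mathrm{Id}\,S$ implies $x\in\mathrm{Id}\,S$. $\mathrm{U_{mon}}(S)$ is the monoid presented by generators $\varepsilon_S(x)$ ($x\in S$) and relations $\varepsilon_S(e)=1$ ($e\in\mathrm{Id}\,S$), $\varepsilon_S(x)\varepsilon_S(y)=\varepsilon_S(xy)$ whenever $xy$ is defined. In a category or monoid $C$, $a\leqslant_C b$ iff $b=ax$ for some $x$, and $a\mathbin{\widetilde\leqslant}_C b$ iff $b=xa$ for some $x$; a left gcd (resp. right gcd) of a pair is a greatest lower bound with respect to $\leqslant$ (resp. $\mathbin{\widetilde\leqslant}$). *)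

theory Defs
  imports Main
begin

text \<open>An arrow-only category is given by a carrier set S, source and target maps
  s, t (whose values are the identities), and a composition m; the product x y
  is defined exactly when t x = s y.\<close>

definition category :: "'a set \<Rightarrow> ('a \<Rightarrow> 'a) \<Rightarrow> ('a \<Rightarrow> 'a) \<Rightarrow> ('a \<Rightarrow> 'a \<Rightarrow> 'a) \<Rightarrow> bool" where
  "category S s t m \<longleftrightarrow>
     (\<forall>x\<in>S. s x \<in> S \<and> t x \<in> S) \<and>
     (\<forall>x\<in>S. s (s x) = s x \<and> t (s x) = s x \<and> s (t x) = t x \<and> t (t x) = t x) \<and>
     (\<forall>x\<in>S. \<forall>y\<in>S. t x = s y \<longrightarrow> m x y \<in> S \<and> s (m x y) = s x \<and> t (m x y) = t y) \<and>
     (\<forall>x\<in>S. m (s x) x = x \<and> m x (t x) = x) \<and>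
     (\<forall>x\<in>S. \<forall>y\<in>S. \<forall>z\<in>S. t x = s y \<longrightarrow> t y = s z \<longrightarrow> m (m x y) z = m x (m y z))"

definition Ids :: "'a set \<Rightarrow> ('a \<Rightarrow> 'a) \<Rightarrow> 'a set" where
  "Ids S s = {e \<in> S. s e = e}"

definition conical :: "'a set \<Rightarrow> ('a \<Rightarrow> 'a) \<Rightarrow> ('a \<Rightarrow> 'a) \<Rightarrow> ('a \<Rightarrow> 'a \<Rightarrow> 'a) \<Rightarrow> bool" where
  "conical S s t m \<longleftrightarrow>
     (\<forall>x\<in>S. \<forall>y\<in>S. t x = s y \<longrightarrow> m x y \<in> Ids S s \<longrightarrow> x \<in> Ids S s)"

definition left_cancellative :: "'a set \<Rightarrow> ('a \<Rightarrow> 'a) \<Rightarrow> ('a \<Rightarrow> 'a) \<Rightarrow> ('a \<Rightarrow> 'a \<Rightarrow> 'a) \<Rightarrow> bool" where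
  "left_cancellative S s t m \<longleftrightarrow>
     (\<forall>a\<in>S. \<forall>x\<in>S. \<forall>y\<in>S. t a = s x \<longrightarrow> t a = s y \<longrightarrow> m a x = m a y \<longrightarrow> x = y)"

definition right_cancellative :: "'a set \<Rightarrow> ('a \<Rightarrow> 'a) \<Rightarrow> ('a \<Rightarrow> 'a) \<Rightarrow> ('a \<Rightarrow> 'a \<Rightarrow> 'a) \<Rightarrow> bool" where
  "right_cancellative S s t m \<longleftrightarrow>
     (\<forall>a\<in>S. \<forall>x\<in>S. \<forall>y\<in>S. t x = s a \<longrightarrow> t y = s a \<longrightarrow> m x a = m y a \<longrightarrow> x = y)"

definition cat_leq :: "'a set \<Rightarrow> ('a \<Rightarrow> 'a) \<Rightarrow> ('a \<Rightarrow> 'a) \<Rightarrow> ('a \<Rightarrow> 'a \<Rightarrow> 'a) \<Rightarrow> 'a \<Rightarrow> 'a \<Rightarrow> bool" where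
  "cat_leq S s t m a b \<longleftrightarrow> (\<exists>x\<in>S. t a = s x \<and> m a x = b)"

definition cat_rleq :: "'a set \<Rightarrow> ('a \<Rightarrow> 'a) \<Rightarrow> ('a \<Rightarrow> 'a) \<Rightarrow> ('a \<Rightarrow> 'a \<Rightarrow> 'a) \<Rightarrow> 'a \<Rightarrow> 'a \<Rightarrow> bool" where
  "cat_rleq S s t m a b \<longleftrightarrow> (\<exists>x\<in>S. t x = s a \<and> m x a = b)"

definition cat_lgcd :: "'a set \<Rightarrow> ('a \<Rightarrow> 'a) \<Rightarrow> ('a \<Rightarrow> 'a) \<Rightarrow> ('a \<Rightarrow> 'a \<Rightarrow> 'a) \<Rightarrow> 'a \<Rightarrow> 'a \<Rightarrow> 'a \<Rightarrow> bool" where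
  "cat_lgcd S s t m a b c \<longleftrightarrow> c \<in> S \<and> cat_leq S s t m c a \<and> cat_leq S s t m c b \<and>
     (\<forall>d\<in>S. cat_leq S s t m d a \<and> cat_leq S s t m d b \<longrightarrow> cat_leq S s t m d c)"

definition cat_rgcd :: "'a set \<Rightarrow> ('a \<Rightarrow> 'a) \<Rightarrow> ('a \<Rightarrow> 'a) \<Rightarrow> ('a \<Rightarrow> 'a \<Rightarrow> 'a) \<Rightarrow> 'a \<Rightarrow> 'a \<Rightarrow> 'a \<Rightarrow> bool" where
  "cat_rgcd S s t m a b c \<longleftrightarrow> c \<in> S \<and> cat_rleq S s t m c a \<and> cat_rleq S s t m c b \<and>
     (\<forall>d\<in>S. cat_rleq S s t m d a \<and> cat_rleq S s t m d b \<longrightarrow> cat_rleq S s t m d c)"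

text \<open>The monoid U_mon(S): elements are words over S (the word [x] represents
  eps_S(x), concatenation is the product, [] is 1) modulo the congruence generated by
  eps(e) = 1 for identities e and eps(x) eps(y) = eps(xy) when xy is defined.\<close>

inductive umon_eq :: "'a set \<Rightarrow> ('a \<Rightarrow> 'a) \<Rightarrow> ('a \<Rightarrow> 'a) \<Rightarrow> ('a \<Rightarrow> 'a \<Rightarrow> 'a) \<Rightarrow> 'a list \<Rightarrow> 'a list \<Rightarrow> bool"
  for S s t m where
  refl: "set w \<subseteq> S \<Longrightarrow> umon_eq S s t m w w"
| sym: "umon_eq S s t m u v \<Longrightarrow> umon_eq S s t m v u"
| trans: "umon_eq S s t m u v \<Longrightarrow> umon_eq S s t m v w \<Longrightarrow> umon_eq S s t m u w"
| ident: "set u \<subseteq> S \<Longrightarrow> set v \<subseteq> S \<Longrightarrow> e \<in> Ids S s \<Longrightarrow> umon_eq S s t m (u @ [e] @ v) (u @ v)"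
| mult: "set u \<subseteq> S \<Longrightarrow> set v \<subseteq> S \<Longrightarrow> x \<in> S \<Longrightarrow> y \<in> S \<Longrightarrow> t x = s y \<Longrightarrow>
         umon_eq S s t m (u @ [x, y] @ v) (u @ [m x y] @ v)"

definition umon_leq :: "'a set \<Rightarrow> ('a \<Rightarrow> 'a) \<Rightarrow> ('a \<Rightarrow> 'a) \<Rightarrow> ('a \<Rightarrow> 'a \<Rightarrow> 'a) \<Rightarrow> 'a list \<Rightarrow> 'a list \<Rightarrow> bool" where
  "umon_leq S s t m u v \<longleftrightarrow> (\<exists>w. set w \<subseteq> S \<and> umon_eq S s t m (u @ w) v)"

definition umon_rleq :: "'a set \<Rightarrow> ('a \<Rightarrow> 'a) \<Rightarrow> ('a \<Rightarrow> 'a) \<Rightarrow> ('a \<Rightarrow> 'a \<Rightarrow> 'a) \<Rightarrow> 'a list \<Rightarrow> 'a list \<Rightarrow> bool" where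
  "umon_rleq S s t m u v \<longleftrightarrow> (\<exists>w. set w \<subseteq> S \<and> umon_eq S s t m (w @ u) v)"

definition umon_lgcd :: "'a set \<Rightarrow> ('a \<Rightarrow> 'a) \<Rightarrow> ('a \<Rightarrow> 'a) \<Rightarrow> ('a \<Rightarrow> 'a \<Rightarrow> 'a) \<Rightarrow> 'a list \<Rightarrow> 'a list \<Rightarrow> 'a list \<Rightarrow> bool" where
  "umon_lgcd S s t m u v c \<longleftrightarrow> set c \<subseteq> S \<and> umon_leq S s t m c u \<and> umon_leq S s t m c v \<and>
     (\<forall>d. set d \<subseteq> S \<and> umon_leq S s t m d u \<and> umon_leq S s t m d v \<longrightarrow> umon_leq S s t m d c)"

definition umon_rgcd :: "'a set \<Rightarrow> ('a \<Rightarrow> 'a) \<Rightarrow> ('a \<Rightarrow> 'a) \<Rightarrow> ('a \<Rightarrow> 'a \<Rightarrow> 'a) \<Rightarrow> 'a list \<Rightarrow> 'a list \<Rightarrow> 'a list \<Rightarrow> bool" where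
  "umon_rgcd S s t m u v c \<longleftrightarrow> set c \<subseteq> S \<and> umon_rleq S s t m c u \<and> umon_rleq S s t m c v \<and>
     (\<forall>d. set d \<subseteq> S \<and> umon_rleq S s t m d u \<and> umon_rleq S s t m d v \<longrightarrow> umon_rleq S s t m d c)"

end

theory Submission
  imports Defs
begin

text \<open>In a conical category, the word problem of \<open>U_mon(S)\<close> is solved by a normal form:
  delete identities and greedily compose adjacent composable arrows. Conicality makes this
  rewriting confluent, since a product of non-identities is never an identity. A word dividing
  the generator \<open>\<epsilon>(a)\<close> on the left then has a normal form of length at most one, so it equals
  \<open>\<epsilon>(x)\<close> for a left divisor \<open>x\<close> of \<open>a\<close> in \<open>S\<close>; hence left divisibility among generators is
  left divisibility in \<open>S\<close>, and the gcds correspond. The right-hand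
  statement is the left-hand one for the opposite category.\<close>

locale conical_category =
  fixes S :: "'a set" and s t :: "'a \<Rightarrow> 'a" and m :: "'a \<Rightarrow> 'a \<Rightarrow> 'a"
  assumes category: "category S s t m" and conical: "conical S s t m"
begin

lemma src_in: "x \<in> S \<Longrightarrow> s x \<in> S"
  and tgt_in: "x \<in> S \<Longrightarrow> t x \<in> S"
  and src_src [simp]: "x \<in> S \<Longrightarrow> s (s x) = s x"
  and tgt_src [simp]: "x \<in> S \<Longrightarrow> t (s x) = s x"
  and src_tgt [simp]: "x \<in> S \<Longrightarrow> s (t x) = t x"
  and tgt_tgt [simp]: "x \<in> S \<Longrightarrow> t (t x) = t x"
  and comp_in: "x \<in> S \<Longrightarrow> y \<in> S \<Longrightarrow> t x = s y \<Longrightarrow> m x y \<in> S"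
  and src_comp [simp]: "x \<in> S \<Longrightarrow> y \<in> S \<Longrightarrow> t x = s y \<Longrightarrow> s (m x y) = s x"
  and tgt_comp [simp]: "x \<in> S \<Longrightarrow> y \<in> S \<Longrightarrow> t x = s y \<Longrightarrow> t (m x y) = t y"
  and comp_src [simp]: "x \<in> S \<Longrightarrow> m (s x) x = x"
  and comp_tgt [simp]: "x \<in> S \<Longrightarrow> m x (t x) = x"
  and comp_assoc: "x \<in> S \<Longrightarrow> y \<in> S \<Longrightarrow> z \<in> S \<Longrightarrow> t x = s y \<Longrightarrow> t y = s z \<Longrightarrow>
    m (m x y) z = m x (m y z)"
  using category unfolding category_def by blast+

lemma tgt_identity: "x \<in> S \<Longrightarrow> s x = x \<Longrightarrow> t x = x"
  by (metis tgt_src)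

lemma src_identity: "x \<in> S \<Longrightarrow> t x = x \<Longrightarrow> s x = x"
  by (metis src_tgt)

lemma comp_identity_left:
  "x \<in> S \<Longrightarrow> y \<in> S \<Longrightarrow> t x = s y \<Longrightarrow> s (m x y) = m x y \<Longrightarrow> s x = x"
  using conical comp_in unfolding conical_def Ids_def by blast

lemma comp_identity_right:
  assumes "x \<in> S" "y \<in> S" "t x = s y" "s (m x y) = m x y"
  shows "s y = y"
proof -
  have "x = s y"
    using comp_identity_left[OF assms] tgt_identity assms by metis
  then show ?thesis
    using assms by (metis comp_src src_comp)
qed

lemma cat_leq_src: "cat_leq S s t m x a \<Longrightarrow> x \<in> S \<Longrightarrow> s x = s a"
  unfolding cat_leq_def by force

lemma cat_leq_src_self: "x \<in> S \<Longrightarrow> cat_leq S s t m (s x) x"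
  unfolding cat_leq_def by force

subsection \<open>Normal forms of words\<close>

definition nf_cons :: "'a \<Rightarrow> 'a list \<Rightarrow> 'a list" where
  "nf_cons x r = (if s x = x then r else (case r of [] \<Rightarrow> [x]
      | y # r' \<Rightarrow> (if t x = s y then m x y # r' else x # r)))"

definition nf :: "'a list \<Rightarrow> 'a list" where
  "nf w = foldr nf_cons w []"

fun normal_word :: "'a list \<Rightarrow> bool" where
  "normal_word [] = True"
| "normal_word [x] = (x \<in> S \<and> s x \<noteq> x)"
| "normal_word (x # y # r) = (x \<in> S \<and> s x \<noteq> x \<and> t x \<noteq> s y \<and> normal_word (y # r))"

lemma nf_Nil [simp]: "nf [] = []"
  by (simp add: nf_def)

lemma nf_Cons [simp]: "nf (x # w) = nf_cons x (nf w)"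
  by (simp add: nf_def)

lemma nf_cons_identity: "s x = x \<Longrightarrow> nf_cons x r = r"
  by (simp add: nf_cons_def)

lemma nf_cons_in: "x \<in> S \<Longrightarrow> set r \<subseteq> S \<Longrightarrow> set (nf_cons x r) \<subseteq> S"
  by (auto simp: nf_cons_def comp_in split: list.splits)

lemma foldr_nf_cons_in: "set p \<subseteq> S \<Longrightarrow> set r \<subseteq> S \<Longrightarrow> set (foldr nf_cons p r) \<subseteq> S"
  by (induction p) (simp_all add: nf_cons_in)

lemma nf_in: "set u \<subseteq> S \<Longrightarrow> set (nf u) \<subseteq> S"
  using foldr_nf_cons_in[of u "[]"] by (simp add: nf_def)

lemma nf_cons_comp:
  assumes x: "x \<in> S" and y: "y \<in> S" and xy: "t x = s y" and r: "set r \<subseteq> S"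
  shows "nf_cons x (nf_cons y r) = nf_cons (m x y) r"
proof (cases "s y = y")
  case True
  then have "m x y = x"
    using xy x by (metis comp_tgt)
  then show ?thesis
    using True by (simp add: nf_cons_identity)
next
  case ny: False
  show ?thesis
  proof (cases "s x = x")
    case True
    then have "m x y = y"
      using tgt_identity x xy y by (metis comp_src)
    then show ?thesis
      using True by (simp add: nf_cons_identity)
  next
    case nx: False
    have nxy: "s (m x y) \<noteq> m x y"
      using comp_identity_left x y xy nx by blast
    show ?thesis
    proof (cases r)
      case Nil
      then show ?thesis
        using nx ny nxy xy by (simp add: nf_cons_def)
    next
      case (Cons z r')
      have z: "z \<in> S"
        using r Cons by auto
      show ?thesis
      proof (cases "t y = s z")
        case True
        then show ?thesis
          using Cons nx ny nxy xy x y z comp_assoc[OF x y z xy True] by (simp add: nf_cons_def)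
      next
        case False
        then show ?thesis
          using Cons nx ny nxy xy x y z by (simp add: nf_cons_def)
      qed
    qed
  qed
qed

lemma nf_cons_foldr:
  assumes x: "x \<in> S" and p: "set p \<subseteq> S" and r: "set r \<subseteq> S"
  shows "nf_cons x (foldr nf_cons p r) = foldr nf_cons (nf_cons x p) r"
proof (cases p)
  case Nil
  then show ?thesis
    by (simp add: nf_cons_def)
next
  case (Cons y p')
  have y: "y \<in> S" and in_S: "set (foldr nf_cons p' r) \<subseteq> S"
    using p r Cons foldr_nf_cons_in by auto
  consider "s x = x" | "s x \<noteq> x" "t x = s y" | "s x \<noteq> x" "t x \<noteq> s y"
    by blast
  then show ?thesis
  proof cases
    case 2
    then show ?thesis
      using Cons nf_cons_comp[OF x y _ in_S] by (simp add: nf_cons_def)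
  qed (use Cons in \<open>simp_all add: nf_cons_def\<close>)
qed

lemma nf_append: "set u \<subseteq> S \<Longrightarrow> set w \<subseteq> S \<Longrightarrow> nf (u @ w) = foldr nf_cons (nf u) (nf w)"
proof (induction u)
  case Nil
  then show ?case
    by (simp add: nf_def)
next
  case (Cons x u)
  then show ?case
    using nf_cons_foldr[of x "nf u" "nf w"] nf_in by auto
qed

lemma normal_word_hd: "normal_word (y # r) \<Longrightarrow> y \<in> S \<and> s y \<noteq> y"
  by (cases r) auto

lemma normal_word_nf_cons:
  assumes x: "x \<in> S" and r: "normal_word r"
  shows "normal_word (nf_cons x r)"
proof (cases "s x = x \<or> r = []")
  case True
  then show ?thesis
    using r x by (auto simp: nf_cons_def)
next
  case False
  then obtain y r' where r_eq: "r = y # r'" and nx: "s x \<noteq> x"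
    by (auto simp: neq_Nil_conv)
  have y: "y \<in> S" "s y \<noteq> y"
    using normal_word_hd r r_eq by auto
  show ?thesis
  proof (cases "t x = s y")
    case True
    have "s (m x y) \<noteq> m x y" "m x y \<in> S"
      using comp_identity_left comp_in x y True nx by blast+
    then show ?thesis
      using r r_eq True nx x y by (cases r') (simp_all add: nf_cons_def)
  next
    case False
    then show ?thesis
      using r r_eq nx x by (simp add: nf_cons_def)
  qed
qed

lemma normal_word_nf: "set u \<subseteq> S \<Longrightarrow> normal_word (nf u)"
  by (induction u) (auto intro: normal_word_nf_cons)

text \<open>Prepending a normal word never shortens: only its last letter can merge.\<close>

lemma foldr_nf_cons_normal_word:
  assumes "normal_word (x # p)" "set q \<subseteq> S"
  shows "\<exists>y rest. foldr nf_cons (x # p) q = y # rest \<and> s y = s x \<and> length p \<le> length rest"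
  using assms
proof (induction p arbitrary: x)
  case Nil
  then show ?case
    by (cases q) (auto simp: nf_cons_def)
next
  case (Cons x2 p')
  obtain y rest where yr: "foldr nf_cons (x2 # p') q = y # rest" "s y = s x2" "length p' \<le> length rest"
    using Cons.IH[of x2] Cons.prems by auto
  have "foldr nf_cons (x # x2 # p') q = nf_cons x (y # rest)"
    using yr by simp
  also have "\<dots> = x # y # rest"
    using Cons.prems(1) yr by (simp add: nf_cons_def)
  finally show ?case
    using yr by auto
qed

lemma nf_prefix_of_short:
  assumes d: "set d \<subseteq> S" and w: "set w \<subseteq> S" and short: "length (nf (d @ w)) \<le> 1"
  shows "nf d = [] \<or> (\<exists>x y. nf d = [x] \<and> nf (d @ w) = [y] \<and> cat_leq S s t m x y)"
proof (cases "nf d")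
  case Nil
  then show ?thesis by simp
next
  case (Cons x p)
  have normal: "normal_word (x # p)"
    using normal_word_nf[OF d] Cons by simp
  have q: "set (nf w) \<subseteq> S"
    using nf_in w by blast
  have eq: "foldr nf_cons (x # p) (nf w) = nf (d @ w)"
    using nf_append[OF d w] Cons by simp
  have p: "p = []"
    using foldr_nf_cons_normal_word[OF normal q] eq short by auto
  have x: "x \<in> S" "s x \<noteq> x"
    using normal p by auto
  have x_nf: "nf_cons x (nf w) = nf (d @ w)"
    using eq p by simp
  show ?thesis
  proof (cases "nf w")
    case Nil
    have "cat_leq S s t m x x"
      unfolding cat_leq_def using x tgt_in by (intro bexI[of _ "t x"]) auto
    then show ?thesis
      using x_nf Nil Cons p x by (auto simp: nf_cons_def)
  next
    case (Cons z q')
    have z: "z \<in> S"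
      using q Cons by auto
    have "nf (d @ w) = (if t x = s z then m x z # q' else x # z # q')"
      using x_nf Cons x by (simp add: nf_cons_def)
    then have "t x = s z" "nf (d @ w) = [m x z]"
      using short by (auto split: if_splits)
    moreover have "cat_leq S s t m x (m x z)"
      unfolding cat_leq_def using z calculation(1) by blast
    ultimately show ?thesis
      using \<open>nf d = x # p\<close> p by auto
  qed
qed

subsection \<open>The monoid \<open>U_mon(S)\<close>\<close>

lemma umon_eq_imp_nf_eq: "umon_eq S s t m u v \<Longrightarrow> nf u = nf v"
proof (induction rule: umon_eq.induct)
  case (ident u v e)
  then have "e \<in> S" "s e = e"
    by (auto simp: Ids_def)
  with ident show ?case
    by (simp add: nf_append nf_cons_identity)
next
  case (mult u v x y)
  have "nf ([x, y] @ v) = nf ([m x y] @ v)"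
    using mult nf_cons_comp nf_in by simp
  then show ?case
    using mult comp_in by (simp add: nf_append)
qed auto

lemma umon_eq_append_left: "umon_eq S s t m u v \<Longrightarrow> set w \<subseteq> S \<Longrightarrow> umon_eq S s t m (w @ u) (w @ v)"
proof (induction rule: umon_eq.induct)
  case (ident u v e)
  then show ?case
    using umon_eq.ident[of "w @ u" S v e s t m] by auto
next
  case (mult u v x y)
  then show ?case
    using umon_eq.mult[of "w @ u" S v x y t s m] by auto
next
  case (refl u)
  then show ?case
    by (intro umon_eq.refl) auto
qed (blast intro: umon_eq.sym umon_eq.trans)+

lemma umon_eq_append_right: "umon_eq S s t m u v \<Longrightarrow> set w \<subseteq> S \<Longrightarrow> umon_eq S s t m (u @ w) (v @ w)"
proof (induction rule: umon_eq.induct)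
  case (ident u v e)
  then show ?case
    using umon_eq.ident[of u S "v @ w" e s t m] by auto
next
  case (mult u v x y)
  then show ?case
    using umon_eq.mult[of u S "v @ w" x y t s m] by auto
next
  case (refl u)
  then show ?case
    by (intro umon_eq.refl) auto
qed (blast intro: umon_eq.sym umon_eq.trans)+

lemma umon_eq_nf_cons:
  assumes x: "x \<in> S" and r: "set r \<subseteq> S"
  shows "umon_eq S s t m (x # r) (nf_cons x r)"
proof (cases "s x = x \<or> r = []")
  case True
  then show ?thesis
    using umon_eq.ident[of "[]" S r x s t m] umon_eq.refl[of "[x]" S s t m] x r
    by (auto simp: Ids_def nf_cons_def)
next
  case False
  then obtain y r' where "r = y # r'" "s x \<noteq> x"
    by (auto simp: neq_Nil_conv)
  then show ?thesis
    using umon_eq.mult[of "[]" S r' x y t s m] umon_eq.refl[of "x # r" S s t m] x r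
    by (auto simp: nf_cons_def)
qed

lemma umon_eq_nf: "set u \<subseteq> S \<Longrightarrow> umon_eq S s t m u (nf u)"
proof (induction u)
  case Nil
  then show ?case
    by (auto intro: umon_eq.refl)
next
  case (Cons x u)
  have "umon_eq S s t m ([x] @ u) ([x] @ nf u)"
    using Cons by (intro umon_eq_append_left) auto
  moreover have "umon_eq S s t m (x # nf u) (nf_cons x (nf u))"
    using Cons nf_in by (intro umon_eq_nf_cons) auto
  ultimately show ?case
    by (auto intro: umon_eq.trans)
qed

lemma umon_leq_eq_left: "umon_eq S s t m d d' \<Longrightarrow> umon_leq S s t m d' c \<Longrightarrow> umon_leq S s t m d c"
  unfolding umon_leq_def by (meson umon_eq_append_right umon_eq.trans)

lemma umon_leq_eq_right: "umon_leq S s t m d c \<Longrightarrow> umon_eq S s t m c c' \<Longrightarrow> umon_leq S s t m d c'"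
  unfolding umon_leq_def by (meson umon_eq.trans)

lemma umon_leq_of_cat_leq:
  assumes "cat_leq S s t m x y" "x \<in> S"
  shows "umon_leq S s t m [x] [y]"
proof -
  obtain z where z: "z \<in> S" "t x = s z" "m x z = y"
    using assms(1) unfolding cat_leq_def by blast
  then have "umon_eq S s t m ([x] @ [z]) [y]"
    using umon_eq.mult[of "[]" S "[]" x z t s m] assms(2) by simp
  then show ?thesis
    unfolding umon_leq_def using z(1) by (intro exI[of _ "[z]"]) simp
qed

lemma umon_leq_single_nf:
  assumes d: "set d \<subseteq> S" and le: "umon_leq S s t m d [a]" and a: "a \<in> S"
  shows "nf d = [] \<or> (\<exists>x. nf d = [x] \<and> cat_leq S s t m x a)"
proof -
  obtain w where w: "set w \<subseteq> S" "umon_eq S s t m (d @ w) [a]"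
    using le unfolding umon_leq_def by blast
  have "nf (d @ w) = nf [a]"
    using umon_eq_imp_nf_eq[OF w(2)] .
  moreover have "length (nf [a]) \<le> 1"
    by (simp add: nf_cons_def)
  ultimately show ?thesis
    using nf_prefix_of_short[OF d w(1)] by (auto simp: nf_cons_def split: if_splits)
qed

lemma umon_leq_single_imp_generator:
  assumes c: "set c \<subseteq> S" and le: "umon_leq S s t m c [a]" and a: "a \<in> S"
  obtains x where "x \<in> S" "cat_leq S s t m x a" "umon_eq S s t m c [x]"
proof -
  have c_nf: "umon_eq S s t m c (nf c)"
    using umon_eq_nf c by blast
  show ?thesis
  proof (cases "nf c = []")
    case True
    have "umon_eq S s t m [s a] []"
      using umon_eq.ident[of "[]" S "[]" "s a" s t m] a src_in by (auto simp: Ids_def)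
    then have "umon_eq S s t m c [s a]"
      using c_nf True by (auto intro: umon_eq.trans umon_eq.sym)
    then show ?thesis
      using that a src_in cat_leq_src_self by blast
  next
    case False
    then obtain x where "nf c = [x]" "cat_leq S s t m x a"
      using umon_leq_single_nf[OF c le a] by blast
    then show ?thesis
      using that c_nf nf_in[OF c] by auto
  qed
qed

lemma umon_leq_single_iff:
  assumes d: "d \<in> S" and x: "x \<in> S" and src: "s d = s x"
  shows "umon_leq S s t m [d] [x] \<longleftrightarrow> cat_leq S s t m d x"
proof
  assume le: "umon_leq S s t m [d] [x]"
  show "cat_leq S s t m d x"
  proof (cases "s d = d")
    case True
    then show ?thesis
      using src cat_leq_src_self x by metis
  next
    case False
    then show ?thesis
      using umon_leq_single_nf[of "[d]" x] le d x by (simp add: nf_cons_def)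
  qed
qed (use umon_leq_of_cat_leq d in blast)

lemma umon_lgcd_of_cat_lgcd:
  assumes a: "a \<in> S" and b: "b \<in> S" and src: "s a = s b" and gcd: "cat_lgcd S s t m a b c"
  shows "umon_lgcd S s t m [a] [b] [c]"
proof -
  have c: "c \<in> S" "cat_leq S s t m c a" "cat_leq S s t m c b"
    and greatest: "\<And>d. d \<in> S \<Longrightarrow> cat_leq S s t m d a \<Longrightarrow> cat_leq S s t m d b \<Longrightarrow> cat_leq S s t m d c"
    using gcd unfolding cat_lgcd_def by auto
  have "umon_leq S s t m d [c]"
    if d: "set d \<subseteq> S" "umon_leq S s t m d [a]" "umon_leq S s t m d [b]" for d
  proof -
    obtain x where x: "x \<in> S" "cat_leq S s t m x a" "umon_eq S s t m d [x]"
      using umon_leq_single_imp_generator[OF d(1,2) a] .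
    have "umon_leq S s t m [x] [b]"
      using umon_leq_eq_left[OF umon_eq.sym[OF x(3)] d(3)] .
    then have "cat_leq S s t m x b"
      using umon_leq_single_iff x b src cat_leq_src by metis
    then have "umon_leq S s t m [x] [c]"
      using greatest x umon_leq_of_cat_leq by blast
    then show ?thesis
      using umon_leq_eq_left x(3) by blast
  qed
  then show ?thesis
    unfolding umon_lgcd_def using c umon_leq_of_cat_leq by auto
qed

lemma cat_lgcd_of_umon_lgcd:
  assumes a: "a \<in> S" and b: "b \<in> S" and src: "s a = s b" and gcd: "umon_lgcd S s t m [a] [b] c"
  shows "\<exists>x. cat_lgcd S s t m a b x"
proof -
  have c: "set c \<subseteq> S" "umon_leq S s t m c [a]" "umon_leq S s t m c [b]"
    and greatest: "\<And>d. set d \<subseteq> S \<Longrightarrow> umon_leq S s t m d [a] \<Longrightarrow> umon_leq S s t m d [b] \<Longrightarrow>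
      umon_leq S s t m d c"
    using gcd unfolding umon_lgcd_def by auto
  obtain x where x: "x \<in> S" "cat_leq S s t m x a" "umon_eq S s t m c [x]"
    using umon_leq_single_imp_generator[OF c(1,2) a] .
  have x_src: "s x = s a"
    using cat_leq_src x by blast
  have "umon_leq S s t m [x] [b]"
    using umon_leq_eq_left[OF umon_eq.sym[OF x(3)] c(3)] .
  then have "cat_leq S s t m x b"
    using umon_leq_single_iff x b src x_src by metis
  moreover have "cat_leq S s t m d x"
    if d: "d \<in> S" "cat_leq S s t m d a" "cat_leq S s t m d b" for d
  proof -
    have "umon_leq S s t m [d] c"
      using greatest d umon_leq_of_cat_leq by auto
    then have "umon_leq S s t m [d] [x]"
      using umon_leq_eq_right x(3) by blast
    then show ?thesis
      using umon_leq_single_iff d x x_src cat_leq_src by metis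
  qed
  ultimately have "cat_lgcd S s t m a b x"
    unfolding cat_lgcd_def using x by blast
  then show ?thesis ..
qed

lemma lgcd_umon_iff_cat:
  assumes "a \<in> S" "b \<in> S" "s a = s b"
  shows "((\<exists>c. umon_lgcd S s t m [a] [b] c) \<longleftrightarrow> (\<exists>c. cat_lgcd S s t m a b c)) \<and>
         (\<forall>c. cat_lgcd S s t m a b c \<longrightarrow> umon_lgcd S s t m [a] [b] [c])"
  using umon_lgcd_of_cat_lgcd[OF assms] cat_lgcd_of_umon_lgcd[OF assms] by blast

subsection \<open>Duality\<close>

lemma conical_category_opposite: "conical_category S t s (\<lambda>x y. m y x)"
proof
  show "category S t s (\<lambda>x y. m y x)"
    unfolding category_def using src_in tgt_in comp_in comp_assoc by auto
  show "conical S t s (\<lambda>x y. m y x)"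
    unfolding conical_def Ids_def
  proof (intro ballI impI)
    fix x y
    assume xy: "x \<in> S" "y \<in> S" "s x = t y" "m y x \<in> {e \<in> S. t e = e}"
    then have "s x = x"
      using comp_identity_right[of y x] src_identity by auto
    then show "x \<in> {e \<in> S. t e = e}"
      using xy tgt_identity by auto
  qed
qed

lemma umon_eq_rev_opposite:
  "umon_eq S s t m u v \<Longrightarrow> umon_eq S t s (\<lambda>x y. m y x) (rev u) (rev v)"
proof (induction rule: umon_eq.induct)
  case (ident u v e)
  have "e \<in> Ids S t"
    using ident tgt_identity by (auto simp: Ids_def)
  then show ?case
    using umon_eq.ident[of "rev v" S "rev u" e t s "\<lambda>x y. m y x"] ident by auto
next
  case (mult u v x y)
  then show ?case
    using umon_eq.mult[of "rev v" S "rev u" y x s t "\<lambda>x y. m y x"] by auto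
next
  case (refl u)
  then show ?case
    by (intro umon_eq.refl) auto
qed (blast intro: umon_eq.sym umon_eq.trans)+

lemma umon_eq_rev_opposite_iff:
  "umon_eq S t s (\<lambda>x y. m y x) (rev u) (rev v) \<longleftrightarrow> umon_eq S s t m u v"
  using umon_eq_rev_opposite
    conical_category.umon_eq_rev_opposite[OF conical_category_opposite, of "rev u" "rev v"]
  by auto

lemma umon_rleq_iff_opposite:
  "umon_rleq S s t m u v \<longleftrightarrow> umon_leq S t s (\<lambda>x y. m y x) (rev u) (rev v)"
proof -
  have "umon_eq S s t m (w @ u) v \<longleftrightarrow> umon_eq S t s (\<lambda>x y. m y x) (rev u @ rev w) (rev v)" for w
    using umon_eq_rev_opposite_iff[of "w @ u" v] by simp
  then show ?thesis
    unfolding umon_rleq_def umon_leq_def by (metis rev_rev_ident set_rev)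
qed

lemma umon_rgcd_iff_opposite:
  "umon_rgcd S s t m u v c \<longleftrightarrow> umon_lgcd S t s (\<lambda>x y. m y x) (rev u) (rev v) (rev c)"
proof -
  let ?leq = "umon_leq S t s (\<lambda>x y. m y x)"
  have "(\<forall>d. set d \<subseteq> S \<and> ?leq d (rev u) \<and> ?leq d (rev v) \<longrightarrow> ?leq d (rev c)) \<longleftrightarrow>
        (\<forall>d. set (rev d) \<subseteq> S \<and> ?leq (rev d) (rev u) \<and> ?leq (rev d) (rev v) \<longrightarrow> ?leq (rev d) (rev c))"
    by (metis rev_rev_ident)
  then show ?thesis
    unfolding umon_rgcd_def umon_lgcd_def umon_rleq_iff_opposite set_rev
    by simp
qed

lemma cat_rgcd_iff_opposite: "cat_rgcd S s t m a b c \<longleftrightarrow> cat_lgcd S t s (\<lambda>x y. m y x) a b c"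
  unfolding cat_rgcd_def cat_lgcd_def cat_rleq_def cat_leq_def by (auto simp: eq_commute)

lemma rgcd_umon_iff_cat:
  assumes "a \<in> S" "b \<in> S" "t a = t b"
  shows "((\<exists>c. umon_rgcd S s t m [a] [b] c) \<longleftrightarrow> (\<exists>c. cat_rgcd S s t m a b c)) \<and>
         (\<forall>c. cat_rgcd S s t m a b c \<longrightarrow> umon_rgcd S s t m [a] [b] [c])"
proof -
  have "(\<exists>c. umon_rgcd S s t m [a] [b] c) \<longleftrightarrow> (\<exists>c. umon_lgcd S t s (\<lambda>x y. m y x) [a] [b] c)"
    unfolding umon_rgcd_iff_opposite by (metis rev_singleton_conv rev_rev_ident)
  then show ?thesis
    using conical_category.lgcd_umon_iff_cat[OF conical_category_opposite assms]
    by (simp add: cat_rgcd_iff_opposite umon_rgcd_iff_opposite)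
qed

end

theorem corollary5p7:
  assumes cat: "category S s t m" and con: "conical S s t m"
    and a: "a \<in> S" and b: "b \<in> S"
  shows "(left_cancellative S s t m \<and> s a = s b \<longrightarrow>
            ((\<exists>c. umon_lgcd S s t m [a] [b] c) \<longleftrightarrow> (\<exists>c. cat_lgcd S s t m a b c)) \<and>
            (\<forall>c. cat_lgcd S s t m a b c \<longrightarrow> umon_lgcd S s t m [a] [b] [c]))
       \<and> (right_cancellative S s t m \<and> t a = t b \<longrightarrow>
            ((\<exists>c. umon_rgcd S s t m [a] [b] c) \<longleftrightarrow> (\<exists>c. cat_rgcd S s t m a b c)) \<and>
            (\<forall>c. cat_rgcd S s t m a b c \<longrightarrow> umon_rgcd S s t m [a] [b] [c]))"
proof -
  interpret conical_category S s t m
    using cat con by unfold_locales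
  show ?thesis
    using lgcd_umon_iff_cat[OF a b] rgcd_umon_iff_cat[OF a b] by blast
qed

end
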